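(* Let $S$ be a quasi-adequate semigroup with an adequate transversal $S^0$. Then $S$ is orthodox if and only if $S^0$ is an inverse semigroup.
   Context: For a semigroup $S$, $S^1$ is $S$ with an identity adjoined, $\mathcal{L},\mathcal{R}$ Green's relations. $\mathcal{R}^\ast=\{(a,b):\forall x,y\in S^1,\ xa=ya\iff xb=yb\}$, $\mathcal{L}^\ast=\{(a,b):\forall x,y\in S^1,\ ax=ay\iff bx=by\}$. $S$ is abundant if each $\mathcal{R}^\ast$- and $\mathcal{L}^\ast$-class contains an idempotent; adequate if also idempotents commute (then $a^+$, $a^\ast$ are the unique idempotents $\mathcal{R}^\ast$-, resp. $\mathcal{L}^\ast$-related to $a$). Quasi-adequate: abundant with idempotents forming a subsemigroup; orthodox: regular with idempotents forming a subsemigroup. An abundant subsemigroup $U$ of abundant $S$ is a $\ast$-subsemigroup if $\mathcal{L}^\ast(U)=\mathcal{L}^\ast(S)\cap(U\times U)$, $\mathcal{R}^\ast(U)=\mathcal{R}^\ast(S)\cap(U\times U)$. An adequate $\ast$-subsemigroup $S^0$ of abundant $S$ is an adequate transversal if each $x\in S$ has a unique $\overline{x}\in S^0$ and idempotents $e,f$ of $S$ with $x=e\overline{x}f$, $e\,\mathcal{L}\,\overline{x}^+$, $f\,\mathcal{R}\,\overline{x}^\ast$. *)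

theory Defs
  imports Main
begin

text \<open>A semigroup is modelled as a subset U of a type with an associative
multiplication, closed under multiplication. Elements of U^1 (U with an
adjoined identity) are represented by 'a option: None is the adjoined identity.\<close>

definition subsemigroup :: "'a::semigroup_mult set \<Rightarrow> bool" where
  "subsemigroup U \<longleftrightarrow> (\<forall>a\<in>U. \<forall>b\<in>U. a * b \<in> U)"

definition one_ext :: "'a set \<Rightarrow> 'a option set" where
  "one_ext U = insert None (Some ` U)"

fun lmul :: "'a::semigroup_mult option \<Rightarrow> 'a \<Rightarrow> 'a" where
  "lmul None a = a"
| "lmul (Some x) a = x * a"

fun rmul :: "'a::semigroup_mult \<Rightarrow> 'a option \<Rightarrow> 'a" where
  "rmul a None = a"
| "rmul a (Some x) = a * x"

definition idems :: "'a::semigroup_mult set \<Rightarrow> 'a set" where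
  "idems U = {e \<in> U. e * e = e}"

definition greenL :: "'a::semigroup_mult set \<Rightarrow> 'a \<Rightarrow> 'a \<Rightarrow> bool" where
  "greenL U a b \<longleftrightarrow> a \<in> U \<and> b \<in> U \<and>
     (\<lambda>x. lmul x a) ` one_ext U = (\<lambda>x. lmul x b) ` one_ext U"

definition greenR :: "'a::semigroup_mult set \<Rightarrow> 'a \<Rightarrow> 'a \<Rightarrow> bool" where
  "greenR U a b \<longleftrightarrow> a \<in> U \<and> b \<in> U \<and>
     (\<lambda>x. rmul a x) ` one_ext U = (\<lambda>x. rmul b x) ` one_ext U"

definition Rstar :: "'a::semigroup_mult set \<Rightarrow> 'a \<Rightarrow> 'a \<Rightarrow> bool" where
  "Rstar U a b \<longleftrightarrow> a \<in> U \<and> b \<in> U \<and>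
     (\<forall>x\<in>one_ext U. \<forall>y\<in>one_ext U. lmul x a = lmul y a \<longleftrightarrow> lmul x b = lmul y b)"

definition Lstar :: "'a::semigroup_mult set \<Rightarrow> 'a \<Rightarrow> 'a \<Rightarrow> bool" where
  "Lstar U a b \<longleftrightarrow> a \<in> U \<and> b \<in> U \<and>
     (\<forall>x\<in>one_ext U. \<forall>y\<in>one_ext U. rmul a x = rmul a y \<longleftrightarrow> rmul b x = rmul b y)"

definition abundant :: "'a::semigroup_mult set \<Rightarrow> bool" where
  "abundant U \<longleftrightarrow> subsemigroup U \<and>
     (\<forall>a\<in>U. (\<exists>e\<in>idems U. Rstar U a e) \<and> (\<exists>e\<in>idems U. Lstar U a e))"

definition adequate :: "'a::semigroup_mult set \<Rightarrow> bool" where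
  "adequate U \<longleftrightarrow> abundant U \<and> (\<forall>e\<in>idems U. \<forall>f\<in>idems U. e * f = f * e)"

definition quasi_adequate :: "'a::semigroup_mult set \<Rightarrow> bool" where
  "quasi_adequate U \<longleftrightarrow> abundant U \<and> (\<forall>e\<in>idems U. \<forall>f\<in>idems U. e * f \<in> idems U)"

definition regular :: "'a::semigroup_mult set \<Rightarrow> bool" where
  "regular U \<longleftrightarrow> subsemigroup U \<and> (\<forall>a\<in>U. \<exists>x\<in>U. a * x * a = a)"

definition orthodox :: "'a::semigroup_mult set \<Rightarrow> bool" where
  "orthodox U \<longleftrightarrow> regular U \<and> (\<forall>e\<in>idems U. \<forall>f\<in>idems U. e * f \<in> idems U)"

definition inverse_semigroup :: "'a::semigroup_mult set \<Rightarrow> bool" where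
  "inverse_semigroup U \<longleftrightarrow> regular U \<and> (\<forall>e\<in>idems U. \<forall>f\<in>idems U. e * f = f * e)"

definition plus :: "'a::semigroup_mult set \<Rightarrow> 'a \<Rightarrow> 'a" where
  "plus U a = (THE e. e \<in> idems U \<and> Rstar U a e)"

definition star :: "'a::semigroup_mult set \<Rightarrow> 'a \<Rightarrow> 'a" where
  "star U a = (THE e. e \<in> idems U \<and> Lstar U a e)"

definition star_subsemigroup :: "'a::semigroup_mult set \<Rightarrow> 'a set \<Rightarrow> bool" where
  "star_subsemigroup U S \<longleftrightarrow> abundant S \<and> abundant U \<and> U \<subseteq> S \<and>
     (\<forall>a\<in>U. \<forall>b\<in>U. (Lstar U a b \<longleftrightarrow> Lstar S a b) \<and> (Rstar U a b \<longleftrightarrow> Rstar S a b))"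

definition adequate_transversal :: "'a::semigroup_mult set \<Rightarrow> 'a set \<Rightarrow> bool" where
  "adequate_transversal S0 S \<longleftrightarrow> adequate S0 \<and> star_subsemigroup S0 S \<and>
     (\<forall>x\<in>S. \<exists>!xb. xb \<in> S0 \<and> (\<exists>e\<in>idems S. \<exists>f\<in>idems S.
        x = e * xb * f \<and> greenL S e (plus S0 xb) \<and> greenR S f (star S0 xb)))"

end

theory Submission
  imports Defs
begin

text \<open>Orthodoxy of S and inversity of S0 both amount to regularity, since quasi-adequacy
  and adequacy already give the conditions on idempotents. If b has an inverse c in S0,
  then bc = b^+ and cb = b^*, and cbc is an inverse of every x = ebf, because
  e L b^+ and f R b^* make b^+ e = b^+ and f b^* = b^*.
  Conversely, if a \<in> S0 has an inverse in S, then y = a^* a' a^+ is an inverse with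
  ay = a^+ and ya = a^*. Writing y = ebf with b \<in> S0, the relation b R* b^+ lets one cancel
  b from the left factor and quasi-adequacy makes (ya)b^+ idempotent, which forces
  e = (ya)b^+; dually f = b^*(ay), so y = a^* b a^+ lies in S0.\<close>

lemma Rstar_cancel:
  assumes "Rstar U a e" "x \<in> U" "z \<in> U" "x * a = z * a"
  shows "x * e = z * e"
proof -
  have "lmul (Some x) a = lmul (Some z) a \<longleftrightarrow> lmul (Some x) e = lmul (Some z) e"
    using assms(1-3) by (auto simp: Rstar_def one_ext_def)
  then show ?thesis using assms(4) by simp
qed

lemma Rstar_cancel_one:
  assumes "Rstar U a e" "x \<in> U" "x * a = a"
  shows "x * e = e"
proof -
  have "lmul (Some x) a = lmul None a \<longleftrightarrow> lmul (Some x) e = lmul None e"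
    using assms(1,2) by (auto simp: Rstar_def one_ext_def)
  then show ?thesis using assms(3) by simp
qed

lemma Lstar_cancel:
  assumes "Lstar U a e" "x \<in> U" "z \<in> U" "a * x = a * z"
  shows "e * x = e * z"
proof -
  have "rmul a (Some x) = rmul a (Some z) \<longleftrightarrow> rmul e (Some x) = rmul e (Some z)"
    using assms(1-3) by (auto simp: Lstar_def one_ext_def)
  then show ?thesis using assms(4) by simp
qed

lemma Lstar_cancel_one:
  assumes "Lstar U a e" "x \<in> U" "a * x = a"
  shows "e * x = e"
proof -
  have "rmul a (Some x) = rmul a None \<longleftrightarrow> rmul e (Some x) = rmul e None"
    using assms(1,2) by (auto simp: Lstar_def one_ext_def)
  then show ?thesis using assms(3) by simp
qed

lemma Rstar_idem_mult_left: "Rstar U a e \<Longrightarrow> e \<in> idems U \<Longrightarrow> e * a = a"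
  by (rule Rstar_cancel_one[where U = U and e = a]) (auto simp: Rstar_def idems_def)

lemma Lstar_idem_mult_right: "Lstar U a e \<Longrightarrow> e \<in> idems U \<Longrightarrow> a * e = a"
  by (rule Lstar_cancel_one[where U = U and e = a]) (auto simp: Lstar_def idems_def)

lemma Rstar_Lstar_inverse:
  assumes "subsemigroup U" "a \<in> U" "a' \<in> U" "a * a' * a = a"
    and p: "p \<in> idems U" "Rstar U a p" and q: "q \<in> idems U" "Lstar U a q"
  shows "a * (q * a' * p) = p" and "(q * a' * p) * a = q"
    and "(q * a' * p) * a * (q * a' * p) = q * a' * p"
proof -
  have "a * a' \<in> U" "a' * a \<in> U"
    using assms(1-3) by (auto simp: subsemigroup_def)
  moreover have "(a * a') * a = a" "a * (a' * a) = a"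
    using assms(4) by (simp_all add: mult.assoc)
  ultimately have aa'p: "a * a' * p = p" and qa'a: "q * (a' * a) = q"
    using Rstar_cancel_one[OF p(2)] Lstar_cancel_one[OF q(2)] by blast+
  have pa: "p * a = a" and aq: "a * q = a"
    using Rstar_idem_mult_left[OF p(2,1)] Lstar_idem_mult_right[OF q(2,1)] .
  show "a * (q * a' * p) = p"
    using aa'p aq by (metis mult.assoc)
  show ya: "(q * a' * p) * a = q"
    using qa'a pa by (metis mult.assoc)
  show "(q * a' * p) * a * (q * a' * p) = q * a' * p"
    using ya aa'p aq by (metis mult.assoc)
qed

lemma lmul_mult_assoc: "lmul x (a * b) = lmul x a * b"
  by (cases x) (simp_all add: mult.assoc)

lemma rmul_mult_assoc: "rmul (a * b) x = a * rmul b x"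
  by (cases x) (simp_all add: mult.assoc)

lemma greenL_idems:
  assumes "greenL U e p" "e * e = e" "p * p = p"
  shows "p * e = p" and "e * p = e"
proof -
  have im: "(\<lambda>x. lmul x e) ` one_ext U = (\<lambda>x. lmul x p) ` one_ext U"
    using assms(1) by (simp add: greenL_def)
  have "p \<in> (\<lambda>x. lmul x p) ` one_ext U" "e \<in> (\<lambda>x. lmul x e) ` one_ext U"
    by (force simp: one_ext_def)+
  then have "p \<in> (\<lambda>x. lmul x e) ` one_ext U" "e \<in> (\<lambda>x. lmul x p) ` one_ext U"
    using im by simp_all
  then obtain z w where "p = lmul z e" "e = lmul w p" by blast
  then show "p * e = p" "e * p = e"
    using assms(2,3) by (metis lmul_mult_assoc)+
qed

lemma greenR_idems:
  assumes "greenR U f q" "f * f = f" "q * q = q"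
  shows "f * q = q" and "q * f = f"
proof -
  have im: "(\<lambda>x. rmul f x) ` one_ext U = (\<lambda>x. rmul q x) ` one_ext U"
    using assms(1) by (simp add: greenR_def)
  have "q \<in> (\<lambda>x. rmul q x) ` one_ext U" "f \<in> (\<lambda>x. rmul f x) ` one_ext U"
    by (force simp: one_ext_def)+
  then have "q \<in> (\<lambda>x. rmul f x) ` one_ext U" "f \<in> (\<lambda>x. rmul q x) ` one_ext U"
    using im by simp_all
  then obtain z w where "q = rmul f z" "f = rmul q w" by blast
  then show "f * q = q" "q * f = f"
    using assms(2,3) by (metis rmul_mult_assoc)+
qed

section \<open>Adequate semigroups\<close>

lemma adequate_Rstar_idem_unique:
  assumes "adequate U" "e \<in> idems U" "Rstar U a e" "g \<in> idems U" "Rstar U a g"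
  shows "e = g"
proof -
  have "e \<in> U" "g \<in> U" using assms by (auto simp: idems_def)
  then have "e * g = g" "g * e = e"
    using Rstar_cancel_one Rstar_idem_mult_left assms(2-5) by metis+
  moreover have "e * g = g * e" using assms(1,2,4) by (simp add: adequate_def)
  ultimately show ?thesis by simp
qed

lemma adequate_Lstar_idem_unique:
  assumes "adequate U" "e \<in> idems U" "Lstar U a e" "g \<in> idems U" "Lstar U a g"
  shows "e = g"
proof -
  have "e \<in> U" "g \<in> U" using assms by (auto simp: idems_def)
  then have "g * e = g" "e * g = e"
    using Lstar_cancel_one Lstar_idem_mult_right assms(2-5) by metis+
  moreover have "e * g = g * e" using assms(1,2,4) by (simp add: adequate_def)
  ultimately show ?thesis by simp
qed

lemma plus:
  assumes "adequate U" "a \<in> U"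
  shows "plus U a \<in> idems U" and "Rstar U a (plus U a)"
proof -
  obtain e where e: "e \<in> idems U" "Rstar U a e"
    using assms by (auto simp: adequate_def abundant_def)
  have "plus U a = e" unfolding plus_def
    using e adequate_Rstar_idem_unique[OF assms(1)] by blast
  then show "plus U a \<in> idems U" "Rstar U a (plus U a)" using e by simp_all
qed

lemma star:
  assumes "adequate U" "a \<in> U"
  shows "star U a \<in> idems U" and "Lstar U a (star U a)"
proof -
  obtain e where e: "e \<in> idems U" "Lstar U a e"
    using assms by (auto simp: adequate_def abundant_def)
  have "star U a = e" unfolding star_def
    using e adequate_Lstar_idem_unique[OF assms(1)] by blast
  then show "star U a \<in> idems U" "Lstar U a (star U a)" using e by simp_all
qed

lemma plus_mult: "adequate U \<Longrightarrow> a \<in> U \<Longrightarrow> plus U a * a = a"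
  using Rstar_idem_mult_left plus by blast

lemma mult_star: "adequate U \<Longrightarrow> a \<in> U \<Longrightarrow> a * star U a = a"
  using Lstar_idem_mult_right star by blast

lemma adequate_inner_inverse:
  assumes "adequate U" "a \<in> U" "b \<in> U" "a * b * a = a"
  shows "a * b = plus U a" and "b * a = star U a"
proof -
  have "a * b \<in> U" "b * a \<in> U"
    using assms(1-3) by (auto simp: adequate_def abundant_def subsemigroup_def)
  moreover have "(a * b) * (a * b) = (a * b * a) * b" "(b * a) * (b * a) = b * (a * b * a)"
    by (simp_all add: mult.assoc)
  ultimately have ab: "a * b \<in> idems U" and ba: "b * a \<in> idems U"
    using assms(4) by (simp_all add: idems_def)
  have "a * b * plus U a = plus U a"
    using Rstar_cancel_one[OF plus(2)[OF assms(1,2)]] ab assms(4) by (simp add: idems_def)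
  moreover have "plus U a * (a * b) = a * b"
    using plus_mult[OF assms(1,2)] by (simp add: mult.assoc[symmetric])
  moreover have "a * b * plus U a = plus U a * (a * b)"
    using assms(1) ab plus(1)[OF assms(1,2)] by (simp add: adequate_def)
  ultimately show "a * b = plus U a" by simp
  have "star U a * (b * a) = star U a"
    using Lstar_cancel_one[OF star(2)[OF assms(1,2)]] ba assms(4)
    by (simp add: idems_def mult.assoc)
  moreover have "b * a * star U a = b * a"
    using mult_star[OF assms(1,2)] by (simp add: mult.assoc)
  moreover have "b * a * star U a = star U a * (b * a)"
    using assms(1) ba star(1)[OF assms(1,2)] by (simp add: adequate_def)
  ultimately show "b * a = star U a" by simp
qed

section \<open>Semigroups with an adequate transversal\<close>

locale adequate_transversal_semigroup =
  fixes S S0 :: "'a::semigroup_mult set"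
  assumes transversal: "adequate_transversal S0 S"
begin

lemma adequate_S0: "adequate S0"
  using transversal by (simp add: adequate_transversal_def)

lemma S0_subset: "S0 \<subseteq> S"
  using transversal by (simp add: adequate_transversal_def star_subsemigroup_def)

lemma subsemigroup_S: "subsemigroup S"
  using transversal
  by (simp add: adequate_transversal_def star_subsemigroup_def abundant_def)

lemma subsemigroup_S0: "subsemigroup S0"
  using adequate_S0 by (simp add: adequate_def abundant_def)

lemma mult_closed: "a \<in> S \<Longrightarrow> b \<in> S \<Longrightarrow> a * b \<in> S"
  using subsemigroup_S by (simp add: subsemigroup_def)

lemma mult_closed_S0: "a \<in> S0 \<Longrightarrow> b \<in> S0 \<Longrightarrow> a * b \<in> S0"
  using subsemigroup_S0 by (simp add: subsemigroup_def)

lemma idems_S0: "e \<in> idems S0 \<Longrightarrow> e \<in> idems S"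
  using S0_subset by (auto simp: idems_def)

lemma Rstar_plus_S: "a \<in> S0 \<Longrightarrow> Rstar S a (plus S0 a)"
  using transversal plus[OF adequate_S0]
  by (auto simp: adequate_transversal_def star_subsemigroup_def idems_def)

lemma Lstar_star_S: "a \<in> S0 \<Longrightarrow> Lstar S a (star S0 a)"
  using transversal star[OF adequate_S0]
  by (auto simp: adequate_transversal_def star_subsemigroup_def idems_def)

lemma factorization:
  assumes "x \<in> S"
  obtains b e f where "b \<in> S0" "e \<in> idems S" "f \<in> idems S" "x = e * b * f"
    and "plus S0 b * e = plus S0 b" "e * plus S0 b = e"
    and "f * star S0 b = star S0 b" "star S0 b * f = f"
proof -
  obtain b e f where b: "b \<in> S0" and ef: "e \<in> idems S" "f \<in> idems S" "x = e * b * f"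
    and "greenL S e (plus S0 b)" "greenR S f (star S0 b)"
    using transversal assms unfolding adequate_transversal_def by blast
  moreover have "plus S0 b * plus S0 b = plus S0 b" "star S0 b * star S0 b = star S0 b"
    using plus(1)[OF adequate_S0 b] star(1)[OF adequate_S0 b] by (simp_all add: idems_def)
  ultimately show ?thesis
    using that greenL_idems[of S e] greenR_idems[of S f] by (simp add: idems_def)
qed

lemma regular_if_regular_S0:
  assumes "regular S0"
  shows "regular S"
  unfolding regular_def
proof (intro conjI subsemigroup_S ballI)
  fix x assume "x \<in> S"
  then obtain b e f where b: "b \<in> S0" and x: "x = e * b * f"
    and e: "plus S0 b * e = plus S0 b" and f: "f * star S0 b = star S0 b"
    by (rule factorization)
  obtain c where c: "c \<in> S0" "b * c * b = b"
    using assms b by (auto simp: regular_def)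
  have bc: "b * c = plus S0 b" and cb: "c * b = star S0 b"
    using adequate_inner_inverse[OF adequate_S0 b c] by simp_all
  have fe: "f * (c * b * c) * e = c * b * c"
    using bc cb e f by (metis mult.assoc)
  have "x * (c * b * c) * x = e * b * (f * (c * b * c) * e) * b * f"
    by (simp add: x mult.assoc)
  also have "\<dots> = e * (b * c * b * c * b) * f"
    by (simp only: fe) (simp add: mult.assoc)
  also have "\<dots> = x" using c(2) by (simp add: x mult.assoc)
  finally show "\<exists>y\<in>S. x * y * x = x"
    using b c S0_subset mult_closed_S0 by blast
qed

end

locale quasi_adequate_transversal_semigroup = adequate_transversal_semigroup +
  assumes quasi_adequate: "quasi_adequate S"
begin

lemma idems_mult_closed: "e \<in> idems S \<Longrightarrow> f \<in> idems S \<Longrightarrow> e * f \<in> idems S"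
  using quasi_adequate by (simp add: quasi_adequate_def)

lemma left_factor_eq:
  assumes b: "b \<in> S0" and e: "e \<in> idems S" "plus S0 b * e = plus S0 b" "e * plus S0 b = e"
    and f: "f * star S0 b = star S0 b"
    and g: "g \<in> idems S" "e * g = g" "g * (e * b * f) = e * b * f"
  shows "e = g * plus S0 b"
proof -
  define p where "p = plus S0 b"
  have p: "p \<in> idems S" "p * e = p" "e * p = e"
    using idems_S0[OF plus(1)[OF adequate_S0 b]] e by (simp_all add: p_def)
  have "e * b = e * b * f * star S0 b"
    using f mult_star[OF adequate_S0 b] by (simp add: mult.assoc)
  also have "\<dots> = g * e * b"
    using g(3) f mult_star[OF adequate_S0 b] by (metis mult.assoc)
  finally have "e * p = g * e * p"
    using Rstar_cancel[OF Rstar_plus_S[OF b], of e "g * e"] e g(1) mult_closed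
    by (simp add: p_def idems_def)
  then have ge: "g * e = e" using p(3) by (simp add: mult.assoc)
  have "g * p * g = e * p * g * p * g"
    using g(2) p(3) by simp
  also have "\<dots> = e * ((p * g) * (p * g))" by (simp add: mult.assoc)
  also have "\<dots> = g"
    using idems_mult_closed[OF p(1) g(1)] g(2) p(3) by (simp add: idems_def mult.assoc[symmetric])
  finally have gpg: "g * p * g = g" .
  have "e = g * p * g * e" using ge gpg by simp
  also have "\<dots> = g * (p * (g * e))" by (simp only: mult.assoc)
  also have "\<dots> = g * p" using ge p(2) by simp
  finally show ?thesis by (simp add: p_def)
qed

lemma right_factor_eq:
  assumes b: "b \<in> S0" and f: "f \<in> idems S" "f * star S0 b = star S0 b" "star S0 b * f = f"
    and e: "plus S0 b * e = plus S0 b"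
    and h: "h \<in> idems S" "h * f = h" "(e * b * f) * h = e * b * f"
  shows "f = star S0 b * h"
proof -
  define q where "q = star S0 b"
  have q: "q \<in> idems S" "f * q = q" "q * f = f"
    using idems_S0[OF star(1)[OF adequate_S0 b]] f by (simp_all add: q_def)
  have "b * f = plus S0 b * e * b * f"
    using e plus_mult[OF adequate_S0 b] by (simp add: mult.assoc)
  also have "\<dots> = b * f * h"
    using h(3) e plus_mult[OF adequate_S0 b] by (metis mult.assoc)
  finally have "q * f = q * (f * h)"
    using Lstar_cancel[OF Lstar_star_S[OF b], of f "f * h"] f h(1) mult_closed
    by (simp add: q_def idems_def mult.assoc)
  then have fh: "f * h = f" using q(3) by (simp add: mult.assoc[symmetric])
  have "h * q * h = h * q * h * q * f"
    using h(2) q(3) by (simp add: mult.assoc)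
  also have "\<dots> = ((h * q) * (h * q)) * f" by (simp add: mult.assoc)
  also have "\<dots> = h"
    using idems_mult_closed[OF h(1) q(1)] h(2) q(3) by (simp add: idems_def mult.assoc)
  finally have hqh: "h * q * h = h" .
  have "f = f * (h * q * h)" using fh hqh by simp
  also have "\<dots> = f * h * q * h" by (simp only: mult.assoc)
  also have "\<dots> = q * h" using fh q(2) by simp
  finally show ?thesis by (simp add: q_def)
qed

lemma inverse_mem_S0:
  assumes "y \<in> S" "y * a * y = y" "y * a \<in> S0" "a * y \<in> S0"
  shows "y \<in> S0"
proof -
  obtain b e f where b: "b \<in> S0" and ef: "e \<in> idems S" "f \<in> idems S" "y = e * b * f"
    and e: "plus S0 b * e = plus S0 b" "e * plus S0 b = e"
    and f: "f * star S0 b = star S0 b" "star S0 b * f = f"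
    by (rule factorization[OF assms(1)])
  have "e * e = e" "f * f = f" using ef by (simp_all add: idems_def)
  then have ey: "e * y = y" and yf: "y * f = y"
    by (simp_all add: ef(3) mult.assoc[symmetric]) (simp add: mult.assoc)
  have "(y * a) * (y * a) = (y * a * y) * a" "(a * y) * (a * y) = a * (y * a * y)"
    by (simp_all add: mult.assoc)
  then have "y * a \<in> idems S" "a * y \<in> idems S"
    using assms S0_subset by (auto simp: idems_def)
  moreover have "e * (y * a) = y * a" "(a * y) * f = a * y"
    by (simp_all add: ey yf mult.assoc[symmetric] mult.assoc)
  moreover have "y * a * (e * b * f) = e * b * f" "(e * b * f) * (a * y) = e * b * f"
    using assms(2) by (simp_all add: ef(3)[symmetric] mult.assoc[symmetric])
  ultimately have e_eq: "e = y * a * plus S0 b" and f_eq: "f = star S0 b * (a * y)"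
    using left_factor_eq[OF b ef(1) e f(1)] right_factor_eq[OF b ef(2) f e(1)] by blast+
  have "y = e * b * f" by (fact ef(3))
  also have "\<dots> = y * a * plus S0 b * b * (star S0 b * (a * y))"
    by (simp only: e_eq[symmetric] f_eq[symmetric])
  also have "\<dots> = y * a * (plus S0 b * b * star S0 b) * (a * y)"
    by (simp add: mult.assoc)
  also have "\<dots> = y * a * b * (a * y)"
    using plus_mult[OF adequate_S0 b] mult_star[OF adequate_S0 b] by simp
  finally have y_eq: "y = y * a * b * (a * y)" .
  have "y * a * b * (a * y) \<in> S0"
    by (rule mult_closed_S0[OF mult_closed_S0[OF assms(3) b] assms(4)])
  then show ?thesis by (subst y_eq)
qed

lemma regular_S0_if_regular:
  assumes "regular S"
  shows "regular S0"
  unfolding regular_def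
proof (intro conjI subsemigroup_S0 ballI)
  fix a assume a: "a \<in> S0"
  then have aS: "a \<in> S" using S0_subset by blast
  obtain a' where a': "a' \<in> S" "a * a' * a = a"
    using assms aS by (auto simp: regular_def)
  define y where "y = star S0 a * a' * plus S0 a"
  have "plus S0 a \<in> idems S" "star S0 a \<in> idems S"
    using plus(1) star(1) adequate_S0 a idems_S0 by blast+
  then have ay: "a * y = plus S0 a" and ya: "y * a = star S0 a" and yay: "y * a * y = y"
    using Rstar_Lstar_inverse[OF subsemigroup_S aS a' _ Rstar_plus_S[OF a] _ Lstar_star_S[OF a]]
    by (simp_all add: y_def)
  moreover have "y \<in> S"
    using a' \<open>plus S0 a \<in> idems S\<close> \<open>star S0 a \<in> idems S\<close> mult_closed
    by (simp add: y_def idems_def)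
  moreover have "plus S0 a \<in> S0" "star S0 a \<in> S0"
    using plus(1)[OF adequate_S0 a] star(1)[OF adequate_S0 a] by (simp_all add: idems_def)
  ultimately have "y \<in> S0"
    using inverse_mem_S0[OF _ yay] ya ay by simp
  moreover have "a * y * a = a"
    using ay plus_mult[OF adequate_S0 a] by simp
  ultimately show "\<exists>x\<in>S0. a * x * a = a" by blast
qed

end

theorem proposition4p1:
  fixes S S0 :: "'a::semigroup_mult set"
  assumes "quasi_adequate S"
    and "adequate_transversal S0 S"
  shows "orthodox S \<longleftrightarrow> inverse_semigroup S0"
proof -
  interpret quasi_adequate_transversal_semigroup S S0
    using assms by unfold_locales
  have "orthodox S \<longleftrightarrow> regular S"
    using idems_mult_closed by (auto simp: orthodox_def)
  also have "\<dots> \<longleftrightarrow> regular S0"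
    using regular_S0_if_regular regular_if_regular_S0 by blast
  also have "\<dots> \<longleftrightarrow> inverse_semigroup S0"
    using adequate_S0 by (auto simp: inverse_semigroup_def adequate_def)
  finally show ?thesis .
qed

end
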